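(* Let $\Gamma$ and $\Gamma'$ be triangulations of connected closed $2$-dimensional surfaces $M$ and $M'$, and let $F$ and $F'$ be faces of $\Gamma$ and $\Gamma'$ respectively. For every special homeomorphism $g:\partial F\to\partial F'$, the connected sum $\Gamma\#_g\Gamma'$ is $3$-colorable if and only if both $\Gamma$ and $\Gamma'$ are $3$-colorable.
   Context: A triangulation of a connected closed surface (not necessarily orientable) is a closed $2$-cell embedding of a connected finite simple graph all of whose faces are triangles. A homeomorphism $g:\partial F\to\partial F'$ is special if it maps vertices to vertices. The connected sum $\Gamma\#_g\Gamma'$ is the triangulation of $M\# M'$ obtained from $\Gamma$ and $\Gamma'$ by removing the interiors of $F$ and $F'$ and gluing $\partial F$ to $\partial F'$ via $g$. A graph is $3$-colorable if it admits a proper vertex coloring with $3$ colors. *)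

theory Defs
  imports Main
begin

text \<open>Combinatorial model of a triangulation of a connected closed surface:
  a finite nonempty family of faces T (indices of type 'f), each face f having
  a set fv f of exactly three vertices; every edge (2-subset of a face) lies in
  exactly two faces; around every vertex the faces containing it are connected
  by sharing edges through that vertex (so they form one cyclic disk link);
  and the underlying graph is connected.\<close>

definition verts :: "('f \<Rightarrow> 'a set) \<Rightarrow> 'f set \<Rightarrow> 'a set" where
  "verts fv T = (\<Union>f\<in>T. fv f)"

definition edges_of :: "('f \<Rightarrow> 'a set) \<Rightarrow> 'f set \<Rightarrow> 'a set set" where
  "edges_of fv T = {e. \<exists>f\<in>T. e \<subseteq> fv f \<and> card e = 2}"

definition adj :: "('f \<Rightarrow> 'a set) \<Rightarrow> 'f set \<Rightarrow> 'a \<Rightarrow> 'a \<Rightarrow> bool" where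
  "adj fv T u v \<longleftrightarrow> {u, v} \<in> edges_of fv T"

definition face_adj_at :: "('f \<Rightarrow> 'a set) \<Rightarrow> 'f set \<Rightarrow> 'a \<Rightarrow> 'f \<Rightarrow> 'f \<Rightarrow> bool" where
  "face_adj_at fv T v f f' \<longleftrightarrow> f \<in> T \<and> f' \<in> T \<and> f \<noteq> f' \<and>
     (\<exists>w. w \<noteq> v \<and> {v, w} \<subseteq> fv f \<and> {v, w} \<subseteq> fv f')"

definition is_triangulation :: "('f \<Rightarrow> 'a set) \<Rightarrow> 'f set \<Rightarrow> bool" where
  "is_triangulation fv T \<longleftrightarrow>
     finite T \<and> T \<noteq> {} \<and>
     (\<forall>f\<in>T. card (fv f) = 3) \<and>
     (\<forall>e\<in>edges_of fv T. card {f\<in>T. e \<subseteq> fv f} = 2) \<and>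
     (\<forall>v\<in>verts fv T. \<forall>f\<in>T. \<forall>f'\<in>T. v \<in> fv f \<and> v \<in> fv f' \<longrightarrow> (face_adj_at fv T v)\<^sup>*\<^sup>* f f') \<and>
     (\<forall>u\<in>verts fv T. \<forall>w\<in>verts fv T. (adj fv T)\<^sup>*\<^sup>* u w)"

definition three_colorable :: "('f \<Rightarrow> 'a set) \<Rightarrow> 'f set \<Rightarrow> bool" where
  "three_colorable fv T \<longleftrightarrow>
     (\<exists>c :: 'a \<Rightarrow> nat. (\<forall>v\<in>verts fv T. c v < 3) \<and>
        (\<forall>u v. adj fv T u v \<longrightarrow> c u \<noteq> c v))"

text \<open>Connected sum along faces F, F' via the vertex bijection g (a special
  homeomorphism of the face boundaries is determined, combinatorially, by the
  bijection it induces on the three vertices).\<close>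
definition cs_vmap :: "('g \<Rightarrow> 'b set) \<Rightarrow> 'g \<Rightarrow> 'a set \<Rightarrow> ('a \<Rightarrow> 'b) \<Rightarrow> 'a + 'b \<Rightarrow> 'a + 'b" where
  "cs_vmap fv' F' A g x = (case x of Inl a \<Rightarrow> Inl a
      | Inr b \<Rightarrow> (if b \<in> fv' F' then Inl (inv_into A g b) else Inr b))"

definition cs_fv :: "('f \<Rightarrow> 'a set) \<Rightarrow> ('g \<Rightarrow> 'b set) \<Rightarrow> 'f \<Rightarrow> 'g \<Rightarrow> ('a \<Rightarrow> 'b)
    \<Rightarrow> 'f + 'g \<Rightarrow> ('a + 'b) set" where
  "cs_fv fv fv' F F' g h = (case h of Inl f \<Rightarrow> Inl ` fv f
      | Inr f' \<Rightarrow> cs_vmap fv' F' (fv F) g ` Inr ` fv' f')"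

definition cs_faces :: "'f set \<Rightarrow> 'g set \<Rightarrow> 'f \<Rightarrow> 'g \<Rightarrow> ('f + 'g) set" where
  "cs_faces T T' F F' = Inl ` (T - {F}) \<union> Inr ` (T' - {F'})"

end

theory Submission
  imports Defs
begin

text \<open>A proper colouring of the connected sum restricts to both summands, because in a
  triangulation every vertex and every edge of the removed face F also lies in some other
  face. Conversely, a proper 3-colouring uses all three colours on every triangle, so the
  colours of \<open>\<Gamma>'\<close> can be permuted to agree with those of \<open>\<Gamma>\<close> across g on the glued
  triangle; the two colourings then combine.\<close>

definition three_coloring :: "('f \<Rightarrow> 'a set) \<Rightarrow> 'f set \<Rightarrow> ('a \<Rightarrow> nat) \<Rightarrow> bool" where
  "three_coloring fv T c \<longleftrightarrow>
     (\<forall>v\<in>verts fv T. c v < 3) \<and> (\<forall>u v. adj fv T u v \<longrightarrow> c u \<noteq> c v)"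

lemma three_colorable_iff_three_coloring:
  "three_colorable fv T \<longleftrightarrow> (\<exists>c. three_coloring fv T c)"
  unfolding three_colorable_def three_coloring_def ..

lemma adj_iff_in_common_face:
  "adj fv T u v \<longleftrightarrow> (\<exists>f\<in>T. u \<in> fv f \<and> v \<in> fv f \<and> u \<noteq> v)"
  unfolding adj_def edges_of_def by (auto simp: card_2_iff doubleton_eq_iff)

lemma adj_imp_in_verts:
  assumes "adj fv T u v"
  shows "u \<in> verts fv T" "v \<in> verts fv T"
  using assms unfolding adj_iff_in_common_face verts_def by auto

lemma three_coloring_comp:
  assumes "three_coloring fv' T' c"
    and "\<And>v. v \<in> verts fv T \<Longrightarrow> \<phi> v \<in> verts fv' T'"
    and "\<And>u v. adj fv T u v \<Longrightarrow> adj fv' T' (\<phi> u) (\<phi> v)"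
  shows "three_coloring fv T (c \<circ> \<phi>)"
  using assms unfolding three_coloring_def by auto

lemma three_coloring_permute_colors:
  assumes "three_coloring fv T c" and "bij_betw \<sigma> {..<3} {..<3}"
  shows "three_coloring fv T (\<sigma> \<circ> c)"
proof -
  have "\<sigma> (c u) \<noteq> \<sigma> (c v)" if "adj fv T u v" for u v
  proof -
    have "c u \<in> {..<3}" "c v \<in> {..<3}" "c u \<noteq> c v"
      using assms(1) adj_imp_in_verts[OF that] that unfolding three_coloring_def by auto
    then show ?thesis using assms(2) unfolding bij_betw_def inj_on_def by blast
  qed
  moreover have "\<sigma> (c v) < 3" if "v \<in> verts fv T" for v
    using assms that unfolding three_coloring_def bij_betw_def by auto
  ultimately show ?thesis unfolding three_coloring_def by simp
qed

lemma three_coloring_bij_on_triangle: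
  assumes "three_coloring fv T c" and "f \<in> T" and "card (fv f) = 3"
  shows "bij_betw c (fv f) {..<3}"
proof -
  have inj: "inj_on c (fv f)"
    using assms(1,2) unfolding three_coloring_def inj_on_def adj_iff_in_common_face by blast
  have "c ` fv f \<subseteq> {..<3}"
    using assms(1,2) unfolding three_coloring_def verts_def by auto
  moreover have "card (c ` fv f) = card {..<3::nat}"
    using card_image[OF inj] assms(3) by simp
  ultimately have "c ` fv f = {..<3}"
    by (simp add: card_subset_eq)
  with inj show ?thesis unfolding bij_betw_def ..
qed

lemma triangulation_card_face:
  assumes "is_triangulation fv T" and "f \<in> T"
  shows "card (fv f) = 3"
  using assms unfolding is_triangulation_def by blast

lemma edge_in_other_face:
  assumes "is_triangulation fv T" and "F \<in> T" and "e \<subseteq> fv F" and "card e = 2"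
  shows "\<exists>f\<in>T. f \<noteq> F \<and> e \<subseteq> fv f"
proof (rule ccontr)
  assume "\<not> ?thesis"
  then have "{f\<in>T. e \<subseteq> fv f} \<subseteq> {F}" by auto
  then have "card {f\<in>T. e \<subseteq> fv f} \<le> 1"
    using card_mono[of "{F}"] by fastforce
  moreover have "e \<in> edges_of fv T"
    using assms(2-4) unfolding edges_of_def by auto
  then have "card {f\<in>T. e \<subseteq> fv f} = 2"
    using assms(1) unfolding is_triangulation_def by auto
  ultimately show False by simp
qed

lemma adj_in_other_face:
  assumes "is_triangulation fv T" and "F \<in> T" and "adj fv T u v"
  shows "\<exists>f\<in>T. f \<noteq> F \<and> u \<in> fv f \<and> v \<in> fv f \<and> u \<noteq> v"
proof -
  obtain f where f: "f \<in> T" "u \<in> fv f" "v \<in> fv f" "u \<noteq> v"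
    using assms(3) unfolding adj_iff_in_common_face by blast
  show ?thesis
  proof (cases "f = F")
    case True
    then have "{u, v} \<subseteq> fv F" "card {u, v} = 2" using f by auto
    from edge_in_other_face[OF assms(1,2) this] f(4) show ?thesis by auto
  qed (use f in auto)
qed

lemma vertex_in_other_face:
  assumes "is_triangulation fv T" and "F \<in> T" and "v \<in> verts fv T"
  shows "\<exists>f\<in>T. f \<noteq> F \<and> v \<in> fv f"
proof -
  obtain f where f: "f \<in> T" "v \<in> fv f"
    using assms(3) unfolding verts_def by auto
  have "card (fv f - {v}) = 2"
    using f triangulation_card_face[OF assms(1)] by (simp add: card_Diff_singleton)
  then obtain w where "w \<in> fv f" "w \<noteq> v"
    by (metis Diff_iff all_not_in_conv card.empty singletonI zero_neq_numeral)
  with f have "adj fv T v w"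
    unfolding adj_iff_in_common_face by auto
  then show ?thesis
    using adj_in_other_face[OF assms(1,2)] by blast
qed

lemma inj_cs_vmap_Inr:
  assumes "fv' F' \<subseteq> g ` A"
  shows "inj (\<lambda>b. cs_vmap fv' F' A g (Inr b))"
  using inj_on_inv_into[OF assms] unfolding inj_def cs_vmap_def inj_on_def by auto

lemma cs_fv_Inl [simp]: "cs_fv fv fv' F F' g (Inl f) = Inl ` fv f"
  unfolding cs_fv_def by simp

lemma cs_fv_Inr [simp]:
  "cs_fv fv fv' F F' g (Inr f') = (\<lambda>b. cs_vmap fv' F' (fv F) g (Inr b)) ` fv' f'"
  unfolding cs_fv_def by auto

lemma Inl_in_cs_faces_iff [simp]: "Inl f \<in> cs_faces T T' F F' \<longleftrightarrow> f \<in> T \<and> f \<noteq> F"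
  unfolding cs_faces_def by auto

lemma Inr_in_cs_faces_iff [simp]: "Inr f' \<in> cs_faces T T' F F' \<longleftrightarrow> f' \<in> T' \<and> f' \<noteq> F'"
  unfolding cs_faces_def by auto

lemma three_colorable_left_of_connected_sum:
  assumes "is_triangulation fv T" and "F \<in> T"
    and "three_colorable (cs_fv fv fv' F F' g) (cs_faces T T' F F')"
  shows "three_colorable fv T"
proof -
  obtain C where C: "three_coloring (cs_fv fv fv' F F' g) (cs_faces T T' F F') C"
    using assms(3) unfolding three_colorable_iff_three_coloring ..
  have "three_coloring fv T (C \<circ> Inl)"
  proof (rule three_coloring_comp[OF C])
    fix v assume "v \<in> verts fv T"
    then obtain f where "f \<in> T" "f \<noteq> F" "v \<in> fv f"
      using vertex_in_other_face[OF assms(1,2)] by blast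
    then show "Inl v \<in> verts (cs_fv fv fv' F F' g) (cs_faces T T' F F')"
      unfolding verts_def by (intro UN_I[of "Inl f"]) auto
  next
    fix u v assume "adj fv T u v"
    then obtain f where "f \<in> T" "f \<noteq> F" "u \<in> fv f" "v \<in> fv f" "u \<noteq> v"
      using adj_in_other_face[OF assms(1,2)] by blast
    then show "adj (cs_fv fv fv' F F' g) (cs_faces T T' F F') (Inl u) (Inl v)"
      unfolding adj_iff_in_common_face by (intro bexI[of _ "Inl f"]) auto
  qed
  then show ?thesis
    unfolding three_colorable_iff_three_coloring by blast
qed

lemma three_colorable_right_of_connected_sum:
  assumes "is_triangulation fv' T'" and "F' \<in> T'" and "bij_betw g (fv F) (fv' F')"
    and "three_colorable (cs_fv fv fv' F F' g) (cs_faces T T' F F')"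
  shows "three_colorable fv' T'"
proof -
  let ?m = "\<lambda>b. cs_vmap fv' F' (fv F) g (Inr b)"
  obtain C where C: "three_coloring (cs_fv fv fv' F F' g) (cs_faces T T' F F') C"
    using assms(4) unfolding three_colorable_iff_three_coloring ..
  have "three_coloring fv' T' (C \<circ> ?m)"
  proof (rule three_coloring_comp[OF C])
    fix v assume "v \<in> verts fv' T'"
    then obtain f where "f \<in> T'" "f \<noteq> F'" "v \<in> fv' f"
      using vertex_in_other_face[OF assms(1,2)] by blast
    then show "?m v \<in> verts (cs_fv fv fv' F F' g) (cs_faces T T' F F')"
      unfolding verts_def by (intro UN_I[of "Inr f"]) auto
  next
    fix u v assume "adj fv' T' u v"
    then obtain f where "f \<in> T'" "f \<noteq> F'" "u \<in> fv' f" "v \<in> fv' f" "u \<noteq> v"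
      using adj_in_other_face[OF assms(1,2)] by blast
    moreover have "?m u \<noteq> ?m v"
      using inj_cs_vmap_Inr[of fv' F' g "fv F"] assms(3) \<open>u \<noteq> v\<close> by (auto simp: bij_betw_def dest: injD)
    ultimately show "adj (cs_fv fv fv' F F' g) (cs_faces T T' F F') (?m u) (?m v)"
      unfolding adj_iff_in_common_face by (intro bexI[of _ "Inr f"]) auto
  qed
  then show ?thesis
    unfolding three_colorable_iff_three_coloring by blast
qed

lemma three_coloring_matching_on_glued_face:
  assumes c: "three_coloring fv T c" and c': "three_coloring fv' T' c'"
    and "F \<in> T" and "F' \<in> T'" and "card (fv F) = 3" and g: "bij_betw g (fv F) (fv' F')"
  obtains c'' where "three_coloring fv' T' c''"
    and "\<And>b. b \<in> fv' F' \<Longrightarrow> c'' b = c (inv_into (fv F) g b)"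
proof
  have c_F: "bij_betw c (fv F) {..<3}"
    using three_coloring_bij_on_triangle[OF c \<open>F \<in> T\<close> \<open>card (fv F) = 3\<close>] .
  have "card (fv' F') = 3"
    using bij_betw_same_card[OF g] \<open>card (fv F) = 3\<close> by simp
  with three_coloring_bij_on_triangle[OF c' \<open>F' \<in> T'\<close>]
  have c'_F': "bij_betw c' (fv' F') {..<3}" .
  define \<sigma> where "\<sigma> = c \<circ> inv_into (fv F) g \<circ> inv_into (fv' F') c'"
  have "bij_betw \<sigma> {..<3} {..<3}"
    unfolding \<sigma>_def
    using bij_betw_inv_into[OF c'_F'] bij_betw_inv_into[OF g] c_F
    by (blast intro: bij_betw_trans)
  then show "three_coloring fv' T' (\<sigma> \<circ> c')"
    using three_coloring_permute_colors[OF c'] by blast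
  show "(\<sigma> \<circ> c') b = c (inv_into (fv F) g b)" if "b \<in> fv' F'" for b
    using c'_F' that unfolding \<sigma>_def bij_betw_def by simp
qed

lemma three_colorable_connected_sum_of_matching:
  assumes c: "three_coloring fv T c" and c'': "three_coloring fv' T' c''"
    and match: "\<And>b. b \<in> fv' F' \<Longrightarrow> c'' b = c (inv_into (fv F) g b)"
  shows "three_colorable (cs_fv fv fv' F F' g) (cs_faces T T' F F')"
proof -
  let ?m = "\<lambda>b. cs_vmap fv' F' (fv F) g (Inr b)"
  define C where "C x = (case x of Inl a \<Rightarrow> c a | Inr b \<Rightarrow> c'' b)" for x
  have C_Inl: "C (Inl a) = c a" for a
    unfolding C_def by simp
  have C_m: "C (?m b) = c'' b" for b
    using match unfolding C_def cs_vmap_def by auto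
  have "three_coloring (cs_fv fv fv' F F' g) (cs_faces T T' F F') C"
    unfolding three_coloring_def
  proof (intro conjI allI impI ballI)
    fix x assume "x \<in> verts (cs_fv fv fv' F F' g) (cs_faces T T' F F')"
    then obtain h where h: "h \<in> cs_faces T T' F F'" "x \<in> cs_fv fv fv' F F' g h"
      unfolding verts_def by blast
    show "C x < 3"
    proof (cases h)
      case (Inl f)
      with h obtain a where "x = Inl a" "a \<in> verts fv T"
        unfolding verts_def by auto
      with c show ?thesis
        unfolding three_coloring_def by (auto simp: C_Inl)
    next
      case (Inr f)
      with h obtain b where "x = ?m b" "b \<in> verts fv' T'"
        unfolding verts_def by auto
      with c'' show ?thesis
        unfolding three_coloring_def by (auto simp: C_m)
    qed
  next
    fix x y assume "adj (cs_fv fv fv' F F' g) (cs_faces T T' F F') x y"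
    then obtain h where h: "h \<in> cs_faces T T' F F'"
      "x \<in> cs_fv fv fv' F F' g h" "y \<in> cs_fv fv fv' F F' g h" "x \<noteq> y"
      unfolding adj_iff_in_common_face by blast
    show "C x \<noteq> C y"
    proof (cases h)
      case (Inl f)
      with h obtain a a' where "x = Inl a" "y = Inl a'" "adj fv T a a'"
        unfolding adj_iff_in_common_face by auto
      with c show ?thesis
        unfolding three_coloring_def by (auto simp: C_Inl)
    next
      case (Inr f)
      with h obtain b b' where "x = ?m b" "y = ?m b'" "adj fv' T' b b'"
        unfolding adj_iff_in_common_face by auto
      with c'' show ?thesis
        unfolding three_coloring_def by (auto simp: C_m)
    qed
  qed
  then show ?thesis
    unfolding three_colorable_iff_three_coloring by blast
qed

theorem lemma3:
  fixes fv :: "'f \<Rightarrow> 'a set" and T :: "'f set" and F :: 'f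
    and fv' :: "'g \<Rightarrow> 'b set" and T' :: "'g set" and F' :: 'g
    and g :: "'a \<Rightarrow> 'b"
  assumes "is_triangulation fv T" and "is_triangulation fv' T'"
    and "F \<in> T" and "F' \<in> T'"
    and "bij_betw g (fv F) (fv' F')"
  shows "three_colorable (cs_fv fv fv' F F' g) (cs_faces T T' F F')
     \<longleftrightarrow> three_colorable fv T \<and> three_colorable fv' T'"
proof
  assume sum: "three_colorable (cs_fv fv fv' F F' g) (cs_faces T T' F F')"
  show "three_colorable fv T \<and> three_colorable fv' T'"
  proof
    show "three_colorable fv T"
      using assms(1,3) sum by (rule three_colorable_left_of_connected_sum)
    show "three_colorable fv' T'"
      using assms(2,4,5) sum by (rule three_colorable_right_of_connected_sum)
  qed
next
  assume "three_colorable fv T \<and> three_colorable fv' T'"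
  then obtain c c' where c: "three_coloring fv T c" and c': "three_coloring fv' T' c'"
    unfolding three_colorable_iff_three_coloring by blast
  obtain c'' where "three_coloring fv' T' c''"
    and "\<And>b. b \<in> fv' F' \<Longrightarrow> c'' b = c (inv_into (fv F) g b)"
    using three_coloring_matching_on_glued_face[OF c c' assms(3,4)
        triangulation_card_face[OF assms(1,3)] assms(5)] by blast
  with c show "three_colorable (cs_fv fv fv' F F' g) (cs_faces T T' F F')"
    by (rule three_colorable_connected_sum_of_matching)
qed

end
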